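(* If $(\mathcal{F},P)$ is a fan poset, then $P$ orients the 1-skeleton of the dual sphere $\Gamma$ of $\mathcal{F}$; that is, identifying each element of $P$ (a maximal cone of $\mathcal{F}$) with the corresponding vertex of $\Gamma$, the Hasse diagram of $P$ is isomorphic as a graph to the 1-skeleton of $\Gamma$.
   Context: A fan in $\mathbb{R}^d$ is a family of nonempty closed polyhedral cones closed under nonempty faces, any two meeting in a face of each; it is complete if its union is $\mathbb{R}^d$. A fan poset $(\mathcal{F},P)$ is a complete fan with a partial order $P$ on its maximal cones such that (a) for each interval $I$ of $P$ the union of cones in $I$ is a polyhedral cone, and (b) for each cone $C$ of $\mathcal{F}$ the set of maximal cones containing $C$ is an interval of $P$. The dual sphere $\Gamma$ of a complete fan $\mathcal{F}$ is the regular CW sphere whose face poset, with a maximum element adjoined, is dual to the face lattice of $\mathcal{F}$ (cones ordered by inclusion, with a top adjoined); its vertices correspond to maximal cones of $\mathcal{F}$ and its edges to $(d-1)$-dimensional cones of $\mathcal{F}$, an edge joining the two maximal cones containing that cone. *)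

theory Defs
  imports "HOL-Analysis.Analysis"
begin

definition polyhedral_cone :: "'a::euclidean_space set \<Rightarrow> bool" where
  "polyhedral_cone C \<longleftrightarrow> (\<exists>A. finite A \<and> C = {x. \<forall>a\<in>A. a \<bullet> x \<le> 0})"

definition fan :: "'a::euclidean_space set set \<Rightarrow> bool" where
  "fan F \<longleftrightarrow> finite F
     \<and> (\<forall>C\<in>F. C \<noteq> {} \<and> polyhedral_cone C)
     \<and> (\<forall>C\<in>F. \<forall>G. G face_of C \<and> G \<noteq> {} \<longrightarrow> G \<in> F)
     \<and> (\<forall>C\<in>F. \<forall>D\<in>F. (C \<inter> D) face_of C \<and> (C \<inter> D) face_of D)"

definition complete_fan :: "'a::euclidean_space set set \<Rightarrow> bool" where
  "complete_fan F \<longleftrightarrow> fan F \<and> \<Union>F = UNIV"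

definition max_cones :: "'a set set \<Rightarrow> 'a set set" where
  "max_cones F = {C\<in>F. \<forall>D\<in>F. C \<subseteq> D \<longrightarrow> D = C}"

definition interval :: "('b \<times> 'b) set \<Rightarrow> 'b \<Rightarrow> 'b \<Rightarrow> 'b set" where
  "interval P x y = {z. (x, z) \<in> P \<and> (z, y) \<in> P}"

definition is_interval :: "('b \<times> 'b) set \<Rightarrow> 'b set \<Rightarrow> bool" where
  "is_interval P I \<longleftrightarrow> (\<exists>x y. (x, y) \<in> P \<and> I = interval P x y)"

definition fan_poset :: "'a::euclidean_space set set \<Rightarrow> ('a set \<times> 'a set) set \<Rightarrow> bool" where
  "fan_poset F P \<longleftrightarrow> complete_fan F
     \<and> partial_order_on (max_cones F) P
     \<and> (\<forall>I. is_interval P I \<longrightarrow> polyhedral_cone (\<Union>I))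
     \<and> (\<forall>C\<in>F. is_interval P {M \<in> max_cones F. C \<subseteq> M})"

definition covers :: "('b \<times> 'b) set \<Rightarrow> 'b \<Rightarrow> 'b \<Rightarrow> bool" where
  "covers P x y \<longleftrightarrow> (x, y) \<in> P \<and> x \<noteq> y \<and> \<not> (\<exists>z. (x, z) \<in> P \<and> (z, y) \<in> P \<and> z \<noteq> x \<and> z \<noteq> y)"

definition hasse_adjacent :: "('b \<times> 'b) set \<Rightarrow> 'b \<Rightarrow> 'b \<Rightarrow> bool" where
  "hasse_adjacent P x y \<longleftrightarrow> covers P x y \<or> covers P y x"

text \<open>Edges of the 1-skeleton of the dual sphere of a complete fan: its vertices are the
  maximal cones, and each (d-1)-dimensional cone of the fan gives an edge joining the
  two maximal cones containing it.\<close>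
definition dual_adjacent :: "'a::euclidean_space set set \<Rightarrow> 'a set \<Rightarrow> 'a set \<Rightarrow> bool" where
  "dual_adjacent F M N \<longleftrightarrow> M \<in> max_cones F \<and> N \<in> max_cones F \<and> M \<noteq> N
     \<and> (\<exists>C\<in>F. aff_dim C = int DIM('a) - 1 \<and> C \<subseteq> M \<and> C \<subseteq> N)"

end

(*
  If N covers M, then {M, N} is an interval, so M \<union> N is a convex cone. A segment from a
  point of M to a point of N - M then crosses M \<inter> N, so M lies in the affine hull of
  M \<inter> N and one further point; as M is full-dimensional, M \<inter> N has codimension one.

  Conversely, let a codimension-one cone C lie in M and N. Near a relative-interior point of C
  the maximal cones containing C cover a ball, each of them reaches one of the two open
  half-balls cut out by the hyperplane spanned by C, and any two of them meet only in C. By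
  connectedness each half-ball is reached by a single such cone, so M and N are the only
  maximal cones containing C; condition (b) makes {M, N} an interval, i.e. a cover relation.
*)
theory Submission
  imports Defs
begin

lemma polyhedral_cone_closed_convex:
  assumes "polyhedral_cone C"
  shows "closed C" "convex C" "0 \<in> C"
proof -
  obtain A where "C = {x. \<forall>a\<in>A. a \<bullet> x \<le> 0}"
    using assms unfolding polyhedral_cone_def by blast
  then have C: "C = (\<Inter>a\<in>A. {x. a \<bullet> x \<le> 0})" by auto
  show "closed C" unfolding C by (intro closed_INT) (simp add: closed_halfspace_le)
  show "convex C" unfolding C by (intro convex_INT) (simp add: convex_halfspace_le)
  show "0 \<in> C" unfolding C by simp
qed

lemma fan_coneD:
  assumes "fan F" "C \<in> F"
  shows "closed C" "convex C" "0 \<in> C"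
proof -
  have "polyhedral_cone C" using assms unfolding fan_def by blast
  then show "closed C" "convex C" "0 \<in> C" by (rule polyhedral_cone_closed_convex)+
qed

lemma fan_Int:
  assumes "fan F" "C \<in> F" "D \<in> F"
  shows "(C \<inter> D) face_of C" "(C \<inter> D) face_of D" "C \<inter> D \<in> F"
proof -
  have faces: "\<forall>C\<in>F. \<forall>D\<in>F. (C \<inter> D) face_of C \<and> (C \<inter> D) face_of D"
    and face_closed: "\<forall>C\<in>F. \<forall>G. G face_of C \<and> G \<noteq> {} \<longrightarrow> G \<in> F"
    using assms(1) unfolding fan_def by blast+
  show "(C \<inter> D) face_of C" "(C \<inter> D) face_of D" using faces assms(2,3) by blast+
  moreover have "0 \<in> C \<inter> D" using fan_coneD(3) assms by blast
  ultimately show "C \<inter> D \<in> F" using face_closed assms(2) by blast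
qed

lemma fan_subset_of_rel_interior:
  assumes "fan F" "C \<in> F" "G \<in> F" "x \<in> rel_interior C" "x \<in> G"
  shows "C \<subseteq> G"
proof -
  have "(C \<inter> G) \<inter> rel_interior C \<noteq> {}"
    using assms(4,5) rel_interior_subset by blast
  then have "C \<subseteq> C \<inter> G"
    using subset_of_face_of[OF fan_Int(1)[OF assms(1-3)] order_refl] by blast
  then show ?thesis by blast
qed

lemma finite_has_max_cone_above:
  assumes "finite F" "G \<in> F"
  obtains K where "K \<in> max_cones F" "G \<subseteq> K"
proof -
  have "\<exists>K\<in>{D\<in>F. G \<subseteq> D}. \<forall>D\<in>{D\<in>F. G \<subseteq> D}. K \<subseteq> D \<longrightarrow> K = D"
    by (rule finite_has_maximal) (use assms in auto)
  then obtain K where K: "K \<in> F" "G \<subseteq> K" and max: "\<forall>D\<in>F. G \<subseteq> D \<longrightarrow> K \<subseteq> D \<longrightarrow> K = D"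
    by auto
  have "D = K" if "D \<in> F" "K \<subseteq> D" for D
    using max that order_trans[OF K(2) that(2)] by auto
  then have "K \<in> max_cones F" unfolding max_cones_def using K(1) by simp
  then show ?thesis using that K(2) by blast
qed

lemma finite_closed_cover_nbhd:
  fixes x :: "'a::metric_space"
  assumes "finite F" "\<And>G. G \<in> F \<Longrightarrow> closed G" "\<Union>F = UNIV"
  obtains r where "r > 0" "\<And>y. y \<in> ball x r \<Longrightarrow> \<exists>G\<in>F. x \<in> G \<and> y \<in> G"
proof -
  define U where "U = \<Union>{G\<in>F. x \<notin> G}"
  have "closed U" unfolding U_def using assms(1,2) by (intro closed_Union) auto
  then have "open (- U)" by (rule open_Compl)
  moreover have "x \<in> - U" unfolding U_def by auto
  ultimately obtain r where r: "r > 0" "ball x r \<subseteq> - U"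
    using open_contains_ball by metis
  show ?thesis
  proof (rule that[OF r(1)])
    fix y assume "y \<in> ball x r"
    then have "y \<notin> U" using r(2) by auto
    moreover have "y \<in> \<Union>F" using assms(3) by simp
    then obtain G where "G \<in> F" "y \<in> G" by blast
    ultimately show "\<exists>G\<in>F. x \<in> G \<and> y \<in> G" unfolding U_def by auto
  qed
qed

lemma complete_fan_nbhd:
  assumes "complete_fan F"
  obtains r where "r > 0" "\<And>y. y \<in> ball x r \<Longrightarrow> \<exists>G\<in>F. x \<in> G \<and> y \<in> G"
proof -
  have fan: "fan F" and cover: "\<Union>F = UNIV" using assms unfolding complete_fan_def by blast+
  have "finite F" using fan unfolding fan_def by (rule conjunct1)
  obtain r where "r > 0" "\<And>y. y \<in> ball x r \<Longrightarrow> \<exists>G\<in>F. x \<in> G \<and> y \<in> G"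
    using finite_closed_cover_nbhd[where x=x, OF \<open>finite F\<close> fan_coneD(1)[OF fan] cover]
    by blast
  then show ?thesis by (rule that)
qed

lemma aff_dim_max_cone:
  fixes F :: "'a::euclidean_space set set"
  assumes "complete_fan F" "K \<in> max_cones F"
  shows "aff_dim K = int DIM('a)"
proof -
  have fan: "fan F" using assms(1) unfolding complete_fan_def by blast
  have KF: "K \<in> F" using assms(2) unfolding max_cones_def by blast
  have "rel_interior K \<noteq> {}" using fan_coneD(2,3)[OF fan KF] rel_interior_eq_empty by blast
  then obtain x where x: "x \<in> rel_interior K" by blast
  obtain r where r: "r > 0" "\<And>y. y \<in> ball x r \<Longrightarrow> \<exists>G\<in>F. x \<in> G \<and> y \<in> G"
    using complete_fan_nbhd[OF assms(1)] by blast
  have "ball x r \<subseteq> K"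
  proof
    fix y assume "y \<in> ball x r"
    then obtain G where G: "G \<in> F" "x \<in> G" "y \<in> G" using r(2) by blast
    then have "K \<subseteq> G" using fan_subset_of_rel_interior[OF fan KF _ x] by blast
    then show "y \<in> K" using G assms(2) unfolding max_cones_def by auto
  qed
  then have "x \<in> interior K" using r(1) by (auto simp: mem_interior)
  then have "interior K \<noteq> {}" by auto
  then show ?thesis by (rule aff_dim_nonempty_interior)
qed

lemma face_of_full_dim_eq:
  fixes K :: "'a::euclidean_space set"
  assumes "convex K" "G face_of K" "int DIM('a) \<le> aff_dim G"
  shows "G = K"
  using face_of_aff_dim_lt[OF assms(1,2)] aff_dim_le_DIM[of K] assms(3) by fastforce

lemma aff_dim_Int_max_cones_less:
  fixes F :: "'a::euclidean_space set set"
  assumes "fan F" "M \<in> max_cones F" "N \<in> max_cones F" "M \<noteq> N"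
  shows "aff_dim (M \<inter> N) < int DIM('a)"
proof (rule ccontr)
  assume ge: "\<not> aff_dim (M \<inter> N) < int DIM('a)"
  have MF: "M \<in> F" and NF: "N \<in> F" using assms(2,3) unfolding max_cones_def by blast+
  have "M \<inter> N = M"
    by (rule face_of_full_dim_eq[OF fan_coneD(2)[OF assms(1) MF] fan_Int(1)[OF assms(1) MF NF]])
      (use ge in simp)
  then have "M \<subseteq> N" by blast
  then show False using assms(2,4) NF unfolding max_cones_def by blast
qed

lemma mem_affine_hull_insert_Int:
  fixes p q :: "'a::real_normed_vector"
  assumes "closed M" "closed N" "convex (M \<union> N)" "p \<in> M" "q \<in> N" "q \<notin> M"
  shows "p \<in> affine hull (insert q (M \<inter> N))"
proof -
  have seg: "closed_segment p q \<subseteq> M \<union> N"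
    using assms(3-5) by (simp add: closed_segment_subset)
  have "M \<inter> N \<inter> closed_segment p q \<noteq> {}"
  proof
    assume "M \<inter> N \<inter> closed_segment p q = {}"
    from connected_closedD[OF connected_segment this seg assms(1,2)]
    show False using assms(4,5) ends_in_segment by blast
  qed
  then obtain g where g: "g \<in> M \<inter> N" "g \<in> closed_segment p q" by blast
  then obtain t where g_def: "g = (1 - t) *\<^sub>R p + t *\<^sub>R q" using in_segment(1) by blast
  have "t \<noteq> 1" using g assms(6) unfolding g_def by auto
  have "p = (1 / (1 - t)) *\<^sub>R ((1 - t) *\<^sub>R p)" using \<open>t \<noteq> 1\<close> by simp
  also have "\<dots> = (1 / (1 - t)) *\<^sub>R g + (- t / (1 - t)) *\<^sub>R q"
    unfolding g_def by (simp add: scaleR_add_right)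
  finally have p: "p = (1 / (1 - t)) *\<^sub>R g + (- t / (1 - t)) *\<^sub>R q" .
  have "g \<in> affine hull (insert q (M \<inter> N))" "q \<in> affine hull (insert q (M \<inter> N))"
    using g by (simp_all add: hull_inc)
  moreover have "1 / (1 - t) + - t / (1 - t) = 1" using \<open>t \<noteq> 1\<close> by (simp add: divide_simps)
  ultimately show ?thesis unfolding p by (rule mem_affine[OF affine_affine_hull])
qed

lemma aff_dim_Int_ge_if_convex_Un:
  fixes M N :: "'a::euclidean_space set"
  assumes "closed M" "closed N" "convex (M \<union> N)" "aff_dim M = int DIM('a)" "\<not> N \<subseteq> M"
  shows "int DIM('a) - 1 \<le> aff_dim (M \<inter> N)"
proof -
  obtain q where q: "q \<in> N" "q \<notin> M" using assms(5) by blast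
  have "M \<subseteq> affine hull (insert q (M \<inter> N))"
    using mem_affine_hull_insert_Int[OF assms(1-3) _ q] by blast
  then have "aff_dim M \<le> aff_dim (affine hull (insert q (M \<inter> N)))"
    by (rule aff_dim_subset)
  also have "\<dots> = aff_dim (insert q (M \<inter> N))" by simp
  also have "\<dots> \<le> aff_dim (M \<inter> N) + 1" by (simp add: aff_dim_insert)
  finally show ?thesis using assms(4) by simp
qed

lemma dual_adjacent_if_convex_Un:
  fixes F :: "'a::euclidean_space set set"
  assumes cf: "complete_fan F" and M: "M \<in> max_cones F" and N: "N \<in> max_cones F"
    and "M \<noteq> N" "convex (M \<union> N)"
  shows "dual_adjacent F M N"
proof -
  have fan: "fan F" using cf unfolding complete_fan_def by blast
  have MF: "M \<in> F" and NF: "N \<in> F" using M N unfolding max_cones_def by blast+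
  have "\<not> N \<subseteq> M" using N MF \<open>M \<noteq> N\<close> unfolding max_cones_def by blast
  then have "int DIM('a) - 1 \<le> aff_dim (M \<inter> N)"
    by (intro aff_dim_Int_ge_if_convex_Un fan_coneD(1)[OF fan] MF NF \<open>convex (M \<union> N)\<close>
        aff_dim_max_cone[OF cf M])
  moreover have "aff_dim (M \<inter> N) < int DIM('a)"
    using aff_dim_Int_max_cones_less[OF fan M N \<open>M \<noteq> N\<close>] .
  ultimately have "aff_dim (M \<inter> N) = int DIM('a) - 1" by linarith
  moreover have "M \<inter> N \<in> F" using fan_Int(3)[OF fan MF NF] .
  ultimately show ?thesis unfolding dual_adjacent_def using M N \<open>M \<noteq> N\<close> by blast
qed

lemma convex_near_above_hyperplane:
  fixes x p a :: "'a::real_inner"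
  assumes "convex K" "x \<in> K" "p \<in> K" "a \<bullet> x = b" "b < a \<bullet> p" "r > 0"
  obtains y where "y \<in> K" "y \<in> ball x r" "b < a \<bullet> y"
proof -
  define s where "s = r / (r + norm (p - x))"
  have pos: "0 < r + norm (p - x)" using assms(6) by (simp add: add_pos_nonneg)
  have s: "0 < s" "s \<le> 1" "s * norm (p - x) < r"
    unfolding s_def using assms(6) pos by (simp_all add: field_simps mult_pos_pos)
  define y where "y = (1 - s) *\<^sub>R x + s *\<^sub>R p"
  have "y \<in> K" unfolding y_def using s by (intro convexD[OF assms(1-3)]) auto
  moreover have "x - y = s *\<^sub>R (x - p)" unfolding y_def by (simp add: algebra_simps)
  then have "dist x y = s * norm (p - x)" using s(1) by (simp add: dist_norm norm_minus_commute)
  moreover have "a \<bullet> y = b + s * (a \<bullet> p - b)"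
    unfolding y_def using assms(4) by (simp add: inner_add_right algebra_simps)
  moreover have "0 < s * (a \<bullet> p - b)" using s(1) assms(5) by simp
  ultimately show ?thesis using that s(3) by simp
qed

lemma connected_disjoint_closed_cover_unique:
  assumes "connected B" "finite S" "\<And>K. K \<in> S \<Longrightarrow> closed K" "B \<subseteq> \<Union>S"
    and disjoint: "\<And>K L. K \<in> S \<Longrightarrow> L \<in> S \<Longrightarrow> K \<noteq> L \<Longrightarrow> K \<inter> L \<inter> B = {}"
    and "K \<in> S" "L \<in> S" "K \<inter> B \<noteq> {}" "L \<inter> B \<noteq> {}"
  shows "K = L"
proof (rule ccontr)
  assume "K \<noteq> L"
  define A where "A = \<Union>(S - {K})"
  have "closed K" using assms(3,6) .
  moreover have "closed A" unfolding A_def using assms(2,3) by (intro closed_Union) auto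
  moreover have "B \<subseteq> K \<union> A" using assms(4) unfolding A_def by blast
  moreover have "K \<inter> A \<inter> B = {}" using disjoint assms(6) unfolding A_def by blast
  moreover have "A \<inter> B \<noteq> {}" using assms(7,9) \<open>K \<noteq> L\<close> unfolding A_def by blast
  ultimately show False using connected_closedD[OF assms(1)] assms(8) by blast
qed

lemma max_cones_Int_eq_codim_one_cone:
  fixes F :: "'a::euclidean_space set set"
  assumes fan: "fan F" and CF: "C \<in> F" and dim: "aff_dim C = int DIM('a) - 1"
    and K: "K \<in> max_cones F" "C \<subseteq> K" and L: "L \<in> max_cones F" "C \<subseteq> L" and "K \<noteq> L"
  shows "K \<inter> L = C"
proof (rule ccontr)
  assume ne: "K \<inter> L \<noteq> C"
  have KF: "K \<in> F" and LF: "L \<in> F" using K L unfolding max_cones_def by blast+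
  have "C face_of K" using fan_Int(2)[OF fan CF KF] K(2) by (simp add: Int_absorb2)
  then have "C face_of K \<inter> L" by (rule face_of_subset) (use K L in auto)
  moreover have "convex (K \<inter> L)" using fan_coneD(2)[OF fan] KF LF by (simp add: convex_Int)
  ultimately have "aff_dim C < aff_dim (K \<inter> L)" using face_of_aff_dim_lt ne by metis
  then show False using aff_dim_Int_max_cones_less[OF fan K(1) L(1) \<open>K \<noteq> L\<close>] dim by simp
qed

lemma convex_near_off_hyperplane:
  fixes x a :: "'a::real_inner"
  assumes "convex K" "x \<in> K" "a \<bullet> x = b" "\<not> K \<subseteq> {y. a \<bullet> y = b}" "r > 0"
  shows "K \<inter> ball x r \<inter> {y. b < a \<bullet> y} \<noteq> {} \<or> K \<inter> ball x r \<inter> {y. a \<bullet> y < b} \<noteq> {}"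
proof -
  obtain p where "p \<in> K" "a \<bullet> p \<noteq> b" using assms(4) by blast
  then consider "b < a \<bullet> p" | "(- a) \<bullet> x = - b" "- b < (- a) \<bullet> p"
    using assms(3) by fastforce
  then show ?thesis
  proof cases
    case 1
    with convex_near_above_hyperplane[OF assms(1,2) \<open>p \<in> K\<close> assms(3) _ assms(5)]
    obtain y where "y \<in> K" "y \<in> ball x r" "b < a \<bullet> y" by blast
    then show ?thesis by blast
  next
    case 2
    with convex_near_above_hyperplane[OF assms(1,2) \<open>p \<in> K\<close> _ _ assms(5)]
    obtain y where "y \<in> K" "y \<in> ball x r" "- b < (- a) \<bullet> y" by blast
    then show ?thesis by auto
  qed
qed

lemma complete_fan_star_covers_ball:
  assumes "complete_fan F" "C \<in> F" "x \<in> rel_interior C"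
  obtains r where "r > 0" "ball x r \<subseteq> \<Union>{K \<in> max_cones F. C \<subseteq> K}"
proof -
  have fan: "fan F" using assms(1) unfolding complete_fan_def by blast
  have "finite F" using fan unfolding fan_def by (rule conjunct1)
  obtain r where "r > 0" and nbhd: "\<And>y. y \<in> ball x r \<Longrightarrow> \<exists>G\<in>F. x \<in> G \<and> y \<in> G"
    using complete_fan_nbhd[OF assms(1)] by blast
  have "ball x r \<subseteq> \<Union>{K \<in> max_cones F. C \<subseteq> K}"
  proof
    fix y assume "y \<in> ball x r"
    then obtain G where G: "G \<in> F" "x \<in> G" "y \<in> G" using nbhd by blast
    obtain K where K: "K \<in> max_cones F" "G \<subseteq> K"
      using finite_has_max_cone_above[OF \<open>finite F\<close> G(1)] .
    have "C \<subseteq> G" using fan_subset_of_rel_interior[OF fan assms(2) G(1) assms(3) G(2)] .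
    then show "y \<in> \<Union>{K \<in> max_cones F. C \<subseteq> K}" using K G(3) by auto
  qed
  with \<open>r > 0\<close> show ?thesis by (rule that)
qed

lemma eq_pair_if_two_sides:
  assumes side: "\<And>K. K \<in> S \<Longrightarrow> P K \<or> Q K"
    and P: "\<And>K L. K \<in> S \<Longrightarrow> L \<in> S \<Longrightarrow> P K \<Longrightarrow> P L \<Longrightarrow> K = L"
    and Q: "\<And>K L. K \<in> S \<Longrightarrow> L \<in> S \<Longrightarrow> Q K \<Longrightarrow> Q L \<Longrightarrow> K = L"
    and "M \<in> S" "N \<in> S" "M \<noteq> N"
  shows "S = {M, N}"
proof -
  have MN: "(P M \<and> Q N) \<or> (Q M \<and> P N)"
    using side[OF \<open>M \<in> S\<close>] side[OF \<open>N \<in> S\<close>] P[OF \<open>M \<in> S\<close> \<open>N \<in> S\<close>] Q[OF \<open>M \<in> S\<close> \<open>N \<in> S\<close>]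
      \<open>M \<noteq> N\<close> by blast
  have "K = M \<or> K = N" if "K \<in> S" for K
    using side[OF that] MN P[OF that \<open>M \<in> S\<close>] P[OF that \<open>N \<in> S\<close>]
      Q[OF that \<open>M \<in> S\<close>] Q[OF that \<open>N \<in> S\<close>] by blast
  then show ?thesis using \<open>M \<in> S\<close> \<open>N \<in> S\<close> by blast
qed
lemma max_cones_containing_codim_one_cone:
  fixes F :: "'a::euclidean_space set set"
  assumes cf: "complete_fan F" and CF: "C \<in> F" and dim: "aff_dim C = int DIM('a) - 1"
    and M: "M \<in> max_cones F" "C \<subseteq> M" and N: "N \<in> max_cones F" "C \<subseteq> N" and "M \<noteq> N"
  shows "{K \<in> max_cones F. C \<subseteq> K} = {M, N}"
proof -
  define S where "S = {K \<in> max_cones F. C \<subseteq> K}"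
  have fan: "fan F" using cf unfolding complete_fan_def by blast
  have SF: "S \<subseteq> F" unfolding S_def max_cones_def by blast
  have "finite F" using fan unfolding fan_def by (rule conjunct1)
  with SF have "finite S" by (rule finite_subset)
  have "aff_dim C = int (DIM('a) - 1)" using dim DIM_positive[where 'a='a] by (simp add: of_nat_diff)
  then obtain a b where hull_C: "affine hull C = {y. a \<bullet> y = b}"
    using aff_dim_eq_hyperplane by blast
  define H where "H = {y. a \<bullet> y = b}"
  have CH: "C \<subseteq> H" unfolding H_def using hull_subset[of C affine] hull_C by simp
  have "rel_interior C \<noteq> {}" using fan_coneD(2,3)[OF fan CF] rel_interior_eq_empty by blast
  then obtain x where x: "x \<in> rel_interior C" by blast
  then have "x \<in> C" using rel_interior_subset by blast
  then have "a \<bullet> x = b" using CH unfolding H_def by blast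
  obtain r where "r > 0" and cover: "ball x r \<subseteq> \<Union>S"
    unfolding S_def by (rule complete_fan_star_covers_ball[OF cf CF x])
  have meet: "K \<inter> L \<subseteq> H" if "K \<in> S" "L \<in> S" "K \<noteq> L" for K L
  proof -
    have "K \<in> max_cones F" "C \<subseteq> K" "L \<in> max_cones F" "C \<subseteq> L" using that unfolding S_def by auto
    then have "K \<inter> L = C" using max_cones_Int_eq_codim_one_cone[OF fan CF dim] \<open>K \<noteq> L\<close> by blast
    then show ?thesis using CH by simp
  qed
  have unique: "K = L"
    if "convex B" "B \<subseteq> ball x r" "B \<inter> H = {}"
      and "K \<in> S" "L \<in> S" "K \<inter> B \<noteq> {}" "L \<inter> B \<noteq> {}" for K L B
  proof (rule connected_disjoint_closed_cover_unique[of B S])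
    show "connected B" using \<open>convex B\<close> by (rule convex_connected)
    show "finite S" by fact
    show "closed K'" if "K' \<in> S" for K' using fan_coneD(1)[OF fan] SF that by blast
    show "B \<subseteq> \<Union>S" using \<open>B \<subseteq> ball x r\<close> cover by (rule order_trans)
    show "K' \<inter> L' \<inter> B = {}" if "K' \<in> S" "L' \<in> S" "K' \<noteq> L'" for K' L'
      using meet[OF that] \<open>B \<inter> H = {}\<close> by blast
  qed fact+
  define above where "above = ball x r \<inter> {y. b < a \<bullet> y}"
  define below where "below = ball x r \<inter> {y. a \<bullet> y < b}"
  have "convex above" "above \<subseteq> ball x r" "above \<inter> H = {}"
    unfolding above_def H_def by (auto intro: convex_Int convex_halfspace_gt)
  note unique_above = unique[OF this]
  have "convex below" "below \<subseteq> ball x r" "below \<inter> H = {}"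
    unfolding below_def H_def by (auto intro: convex_Int convex_halfspace_lt)
  note unique_below = unique[OF this]
  have side: "K \<inter> above \<noteq> {} \<or> K \<inter> below \<noteq> {}" if "K \<in> S" for K
  proof -
    have KF: "K \<in> F" and "C \<subseteq> K" and Kmax: "K \<in> max_cones F"
      using that SF unfolding S_def by auto
    have "\<not> K \<subseteq> {y. a \<bullet> y = b}"
    proof
      assume "K \<subseteq> {y. a \<bullet> y = b}"
      then have "aff_dim K \<le> aff_dim (affine hull C)" unfolding hull_C by (rule aff_dim_subset)
      then show False using aff_dim_max_cone[OF cf Kmax] dim by simp
    qed
    moreover have "x \<in> K" using \<open>x \<in> C\<close> \<open>C \<subseteq> K\<close> by blast
    ultimately show ?thesis
      using convex_near_off_hyperplane[OF fan_coneD(2)[OF fan KF] _ \<open>a \<bullet> x = b\<close> _ \<open>r > 0\<close>]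
      unfolding above_def below_def by (simp add: Int_assoc)
  qed
  have "M \<in> S" "N \<in> S" unfolding S_def using M N by blast+
  from eq_pair_if_two_sides[OF side unique_above unique_below this \<open>M \<noteq> N\<close>]
  show ?thesis unfolding S_def .
qed

lemma covers_iff_interval_eq_pair:
  assumes "P \<subseteq> A \<times> A" "refl_on A P"
  shows "covers P x y \<longleftrightarrow> (x, y) \<in> P \<and> x \<noteq> y \<and> interval P x y = {x, y}"
proof -
  have "{x, y} \<subseteq> interval P x y" if "(x, y) \<in> P"
    using that assms unfolding refl_on_def interval_def by blast
  then show ?thesis unfolding covers_def interval_def by blast
qed

lemma hasse_adjacent_iff_is_interval_pair:
  assumes "P \<subseteq> A \<times> A" "refl_on A P" "antisym P" "x \<noteq> y"
  shows "hasse_adjacent P x y \<longleftrightarrow> is_interval P {x, y}"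
proof
  assume "hasse_adjacent P x y"
  then show "is_interval P {x, y}"
    unfolding hasse_adjacent_def is_interval_def
    using covers_iff_interval_eq_pair[OF assms(1,2)] by (metis insert_commute)
next
  assume "is_interval P {x, y}"
  then obtain u v where uv: "(u, v) \<in> P" and I: "interval P u v = {x, y}"
    unfolding is_interval_def by blast
  have "u \<in> interval P u v" "v \<in> interval P u v"
    using uv assms(1,2) unfolding refl_on_def interval_def by blast+
  moreover have "u \<noteq> v"
  proof
    assume "u = v"
    then have "interval P u v \<subseteq> {u}" using assms(3) unfolding antisym_def interval_def by blast
    then show False using I assms(4) by blast
  qed
  ultimately have "{u, v} = {x, y}" using I by (auto simp: doubleton_eq_iff)
  moreover have "covers P u v"
    using covers_iff_interval_eq_pair[OF assms(1,2)] uv I \<open>u \<noteq> v\<close> calculation by simp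
  ultimately show "hasse_adjacent P x y" unfolding hasse_adjacent_def by (metis doubleton_eq_iff)
qed

lemma is_interval_pair_iff_dual_adjacent:
  fixes F :: "'a::euclidean_space set set"
  assumes fp: "fan_poset F P" and M: "M \<in> max_cones F" and N: "N \<in> max_cones F" and "M \<noteq> N"
  shows "is_interval P {M, N} \<longleftrightarrow> dual_adjacent F M N"
proof -
  have cf: "complete_fan F" using fp unfolding fan_poset_def by blast
  show ?thesis
  proof
    assume "is_interval P {M, N}"
    then have "polyhedral_cone (M \<union> N)" using fp unfolding fan_poset_def by fastforce
    then have "convex (M \<union> N)" by (rule polyhedral_cone_closed_convex)
    then show "dual_adjacent F M N" by (rule dual_adjacent_if_convex_Un[OF cf M N \<open>M \<noteq> N\<close>])
  next
    assume "dual_adjacent F M N"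
    then obtain C where "C \<in> F" "aff_dim C = int DIM('a) - 1" "C \<subseteq> M" "C \<subseteq> N"
      unfolding dual_adjacent_def by blast
    then have "{K \<in> max_cones F. C \<subseteq> K} = {M, N}"
      using max_cones_containing_codim_one_cone[OF cf] M N \<open>M \<noteq> N\<close> by blast
    moreover have "is_interval P {K \<in> max_cones F. C \<subseteq> K}"
      using fp \<open>C \<in> F\<close> unfolding fan_poset_def by blast
    ultimately show "is_interval P {M, N}" by simp
  qed
qed

theorem proposition3p3:
  fixes F :: "'a::euclidean_space set set" and P :: "('a set \<times> 'a set) set"
  assumes "fan_poset F P"
  shows "\<forall>M\<in>max_cones F. \<forall>N\<in>max_cones F. hasse_adjacent P M N \<longleftrightarrow> dual_adjacent F M N"
proof (intro ballI)
  fix M N assume M: "M \<in> max_cones F" and N: "N \<in> max_cones F"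
  show "hasse_adjacent P M N \<longleftrightarrow> dual_adjacent F M N"
  proof (cases "M = N")
    case True
    then show ?thesis by (simp add: hasse_adjacent_def covers_def dual_adjacent_def)
  next
    case False
    have "partial_order_on (max_cones F) P" using assms unfolding fan_poset_def by blast
    then have "hasse_adjacent P M N \<longleftrightarrow> is_interval P {M, N}"
      using hasse_adjacent_iff_is_interval_pair[OF partial_order_onD(4,1,3) False] by blast
    also have "\<dots> \<longleftrightarrow> dual_adjacent F M N"
      by (rule is_interval_pair_iff_dual_adjacent[OF assms M N False])
    finally show ?thesis .
  qed
qed

end
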